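(* Let $G=G_{A,B}$ be a DSR graph (for some $A\in\mathbb{R}^{n\times m}$, $B\in\mathbb{R}^{m\times n}$) which is steady. Then every (nonempty) closed walk in $G$ is an s-walk.
   Context: DSR graphs: for $A\in\mathbb{R}^{n\times m}$, $B\in\mathbb{R}^{m\times n}$, $G_{A,B}$ is the signed, labelled bipartite digraph with S-vertices $S_1,\dots,S_n$ and R-vertices $R_1,\dots,R_m$, with an arc $R_j\to S_i$ of sign $\mathrm{sign}(A_{ij})$ iff $A_{ij}\ne0$ and an arc $S_i\to R_j$ of sign $\mathrm{sign}(B_{ji})$ iff $B_{ji}\ne0$; a pair of antiparallel arcs of the same sign is regarded as a single undirected edge, traversable in both directions. An edge arising from $A_{ij}\ne0$ (R-to-S or undirected) has label $|A_{ij}|$; an edge with only S-to-R orientation has label $\infty$. A walk is an alternating sequence of vertices and edges traversing each edge consistently with its orientation, with repetitions of vertices and edges allowed; it is closed if its first and last vertices coincide. A cycle is a nonempty closed walk that repeats no vertex except first$=$last (a 2-cycle requires two distinct edges between the same vertices). A closed walk $(e_1,\dots,e_{2r})$ is an s-walk if all its labels are finite and $\prod_{i=1}^r l(e_{2i-1})=\prod_{i=1}^r l(e_{2i})$; an s-cycle is a cycle that is an s-walk. $G$ is steady if all its cycles are s-cycles. *)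

theory Defs
  imports Main "HOL.Real"
begin

text \<open>DSR graph G_{A,B} for A (n x m) and B (m x n), matrices given as functions
  with explicit dimensions: A i j for i < n, j < m; B j i for j < m, i < n.\<close>

datatype vtx = S nat | R nat

text \<open>Edges between S_i and R_j: EA i j is the edge arising from A_ij \<noteq> 0
  (undirected if B_ji has the same nonzero sign, otherwise the arc R_j \<rightarrow> S_i);
  EB i j is the arc S_i \<rightarrow> R_j arising from B_ji \<noteq> 0 when it is not merged
  into an undirected edge.\<close>
datatype edge = EA nat nat | EB nat nat

definition undirected :: "(nat \<Rightarrow> nat \<Rightarrow> real) \<Rightarrow> (nat \<Rightarrow> nat \<Rightarrow> real) \<Rightarrow> nat \<Rightarrow> nat \<Rightarrow> bool" where
  "undirected A B i j \<longleftrightarrow> A i j \<noteq> 0 \<and> B j i \<noteq> 0 \<and> sgn (A i j) = sgn (B j i)"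

definition traverses ::
  "(nat \<Rightarrow> nat \<Rightarrow> real) \<Rightarrow> (nat \<Rightarrow> nat \<Rightarrow> real) \<Rightarrow> nat \<Rightarrow> nat \<Rightarrow> vtx \<Rightarrow> edge \<Rightarrow> vtx \<Rightarrow> bool" where
  "traverses A B n m u e v = (case e of
      EA i j \<Rightarrow> i < n \<and> j < m \<and> A i j \<noteq> 0 \<and>
                ((u = R j \<and> v = S i) \<or> (u = S i \<and> v = R j \<and> undirected A B i j))
    | EB i j \<Rightarrow> i < n \<and> j < m \<and> B j i \<noteq> 0 \<and> \<not> undirected A B i j \<and>
                u = S i \<and> v = R j)"

text \<open>Labels: None represents the label \<infinity>.\<close>
fun label :: "(nat \<Rightarrow> nat \<Rightarrow> real) \<Rightarrow> edge \<Rightarrow> real option" where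
  "label A (EA i j) = Some \<bar>A i j\<bar>"
| "label A (EB i j) = None"

definition is_walk ::
  "(nat \<Rightarrow> nat \<Rightarrow> real) \<Rightarrow> (nat \<Rightarrow> nat \<Rightarrow> real) \<Rightarrow> nat \<Rightarrow> nat \<Rightarrow> vtx list \<Rightarrow> edge list \<Rightarrow> bool" where
  "is_walk A B n m vs es \<longleftrightarrow> length vs = Suc (length es) \<and>
     (\<forall>t < length es. traverses A B n m (vs ! t) (es ! t) (vs ! Suc t))"

definition closed_walk ::
  "(nat \<Rightarrow> nat \<Rightarrow> real) \<Rightarrow> (nat \<Rightarrow> nat \<Rightarrow> real) \<Rightarrow> nat \<Rightarrow> nat \<Rightarrow> vtx list \<Rightarrow> edge list \<Rightarrow> bool" where
  "closed_walk A B n m vs es \<longleftrightarrow> is_walk A B n m vs es \<and> hd vs = last vs"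

text \<open>Cycle: nonempty closed walk repeating no vertex except first = last,
  with pairwise distinct edges (needed for 2-cycles, automatic otherwise).\<close>
definition is_cycle ::
  "(nat \<Rightarrow> nat \<Rightarrow> real) \<Rightarrow> (nat \<Rightarrow> nat \<Rightarrow> real) \<Rightarrow> nat \<Rightarrow> nat \<Rightarrow> vtx list \<Rightarrow> edge list \<Rightarrow> bool" where
  "is_cycle A B n m vs es \<longleftrightarrow> closed_walk A B n m vs es \<and> es \<noteq> [] \<and>
     distinct (tl vs) \<and> distinct es"

text \<open>s-walk: closed walk (e_1,...,e_{2r}), all labels finite, and the product of
  labels of e_1,e_3,... equals that of e_2,e_4,... (0-based: even vs odd positions).\<close>
definition s_walk ::
  "(nat \<Rightarrow> nat \<Rightarrow> real) \<Rightarrow> (nat \<Rightarrow> nat \<Rightarrow> real) \<Rightarrow> nat \<Rightarrow> nat \<Rightarrow> vtx list \<Rightarrow> edge list \<Rightarrow> bool" where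
  "s_walk A B n m vs es \<longleftrightarrow> closed_walk A B n m vs es \<and>
     (\<forall>e \<in> set es. label A e \<noteq> None) \<and>
     (\<Prod>t \<in> {t. t < length es \<and> even t}. the (label A (es ! t))) =
     (\<Prod>t \<in> {t. t < length es \<and> odd t}. the (label A (es ! t)))"

definition s_cycle ::
  "(nat \<Rightarrow> nat \<Rightarrow> real) \<Rightarrow> (nat \<Rightarrow> nat \<Rightarrow> real) \<Rightarrow> nat \<Rightarrow> nat \<Rightarrow> vtx list \<Rightarrow> edge list \<Rightarrow> bool" where
  "s_cycle A B n m vs es \<longleftrightarrow> is_cycle A B n m vs es \<and> s_walk A B n m vs es"

definition steady :: "(nat \<Rightarrow> nat \<Rightarrow> real) \<Rightarrow> (nat \<Rightarrow> nat \<Rightarrow> real) \<Rightarrow> nat \<Rightarrow> nat \<Rightarrow> bool" where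
  "steady A B n m \<longleftrightarrow> (\<forall>vs es. is_cycle A B n m vs es \<longrightarrow> s_cycle A B n m vs es)"

end

theory Submission
  imports Defs
begin

text \<open>If some vertex repeats, the walk splits
  into two shorter closed walks; since the graph is bipartite, the inner one has even length,
  so the alternating products of the whole walk are the products of those of the pieces.
  Otherwise the walk either is a cycle or, if it repeats an edge, runs along a single
  undirected edge and back, whose label is finite.\<close>

fun prod_even :: "('a \<Rightarrow> 'b::comm_monoid_mult) \<Rightarrow> 'a list \<Rightarrow> 'b"
  and prod_odd :: "('a \<Rightarrow> 'b::comm_monoid_mult) \<Rightarrow> 'a list \<Rightarrow> 'b" where
  "prod_even f [] = 1"
| "prod_even f (e # es) = f e * prod_odd f es"
| "prod_odd f [] = 1"
| "prod_odd f (e # es) = prod_even f es"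

lemma prod_even_odd_nth:
  "(\<Prod>t\<in>{t. t < length es \<and> even t}. f (es ! t)) = prod_even f es \<and>
   (\<Prod>t\<in>{t. t < length es \<and> odd t}. f (es ! t)) = prod_odd f es"
proof (induction es)
  case (Cons e es)
  have evens: "{t. t < Suc (length es) \<and> even t} = insert 0 (Suc ` {t. t < length es \<and> odd t})"
  proof (intro set_eqI iffI)
    fix x assume "x \<in> {t. t < Suc (length es) \<and> even t}"
    then show "x \<in> insert 0 (Suc ` {t. t < length es \<and> odd t})" by (cases x) auto
  qed auto
  have odds: "{t. t < Suc (length es) \<and> odd t} = Suc ` {t. t < length es \<and> even t}"
  proof (intro set_eqI iffI)
    fix x assume "x \<in> {t. t < Suc (length es) \<and> odd t}"
    then show "x \<in> Suc ` {t. t < length es \<and> even t}" by (cases x) auto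
  qed auto
  have "(\<Prod>t\<in>Suc ` {t. t < length es \<and> odd t}. f ((e # es) ! t)) = prod_odd f es"
    "(\<Prod>t\<in>Suc ` {t. t < length es \<and> even t}. f ((e # es) ! t)) = prod_even f es"
    using Cons by (simp_all add: prod.reindex)
  then show ?case
    by (simp add: evens odds)
qed simp

lemma s_walk_iff_prod_even_odd:
  "s_walk A B n m vs es \<longleftrightarrow> closed_walk A B n m vs es \<and> (\<forall>e\<in>set es. label A e \<noteq> None) \<and>
     prod_even (\<lambda>e. the (label A e)) es = prod_odd (\<lambda>e. the (label A e)) es"
  unfolding s_walk_def using prod_even_odd_nth[of "\<lambda>e. the (label A e)" es] by simp

lemma prod_even_odd_append:
  "prod_even f (xs @ ys) = prod_even f xs * (if even (length xs) then prod_even f ys else prod_odd f ys) \<and>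
   prod_odd f (xs @ ys) = prod_odd f xs * (if even (length xs) then prod_odd f ys else prod_even f ys)"
  by (induction xs) (auto simp: mult_ac)

lemma prod_even_odd_splice:
  assumes "even (length zs)" "prod_even f zs = prod_odd f zs"
    and "prod_even f (xs @ ys) = prod_odd f (xs @ ys)"
  shows "prod_even f (xs @ zs @ ys) = prod_odd f (xs @ zs @ ys)"
  using assms prod_even_odd_append[of f xs "zs @ ys"] prod_even_odd_append[of f zs ys]
    prod_even_odd_append[of f xs ys]
  by (auto split: if_splits) (metis mult.left_commute)+

fun is_S :: "vtx \<Rightarrow> bool" where
  "is_S (S _) = True"
| "is_S (R _) = False"

lemma traverses_is_S: "traverses A B n m u e v \<Longrightarrow> is_S u \<noteq> is_S v"
  by (auto simp: traverses_def split: edge.splits)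

lemma traverses_same_edge:
  "traverses A B n m u e v \<Longrightarrow> traverses A B n m u' e v' \<Longrightarrow>
   (u = u' \<and> v = v') \<or> (u = v' \<and> v = u')"
  by (auto simp: traverses_def split: edge.splits)

lemma traverses_both_ways_label:
  "traverses A B n m u e v \<Longrightarrow> traverses A B n m v e u \<Longrightarrow> label A e \<noteq> None"
  by (auto simp: traverses_def split: edge.splits)

lemma closed_walk_iff_nth:
  "closed_walk A B n m vs es \<longleftrightarrow> is_walk A B n m vs es \<and> vs ! 0 = vs ! length es"
  unfolding closed_walk_def is_walk_def
  by (metis hd_conv_nth last_conv_nth diff_Suc_1 list.size(3) nat.distinct(1))

lemma is_walk_is_S_nth:
  assumes "is_walk A B n m vs es" "t < length vs"
  shows "is_S (vs ! t) = (is_S (vs ! 0) = even t)"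
  using assms(2)
proof (induction t)
  case (Suc t)
  then have "traverses A B n m (vs ! t) (es ! t) (vs ! Suc t)"
    using assms(1) unfolding is_walk_def by auto
  then show ?case
    using traverses_is_S Suc by fastforce
qed simp

lemma is_walk_repeated_vertex_even:
  assumes "is_walk A B n m vs es" "i \<le> j" "j < length vs" "vs ! i = vs ! j"
  shows "even (j - i)"
  using assms is_walk_is_S_nth[OF assms(1), of i] is_walk_is_S_nth[OF assms(1), of j] by auto

lemma is_walk_segment:
  assumes "is_walk A B n m vs es" "i \<le> j" "j \<le> length es"
  shows "is_walk A B n m (take (j - i + 1) (drop i vs)) (take (j - i) (drop i es))"
  using assms unfolding is_walk_def by (auto simp: nth_take nth_drop)

lemma is_walk_shortcut:
  assumes "is_walk A B n m vs es" "i \<le> j" "j \<le> length es" "vs ! i = vs ! j"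
  shows "is_walk A B n m (take i vs @ drop j vs) (take i es @ drop j es)"
  unfolding is_walk_def
proof (intro conjI allI impI)
  have len: "length vs = Suc (length es)"
    and step: "\<And>t. t < length es \<Longrightarrow> traverses A B n m (vs ! t) (es ! t) (vs ! Suc t)"
    using assms(1) unfolding is_walk_def by auto
  then show "length (take i vs @ drop j vs) = Suc (length (take i es @ drop j es))"
    using assms(2,3) by auto
  fix t assume t: "t < length (take i es @ drop j es)"
  consider "Suc t < i" | "Suc t = i" | "i \<le> t" by linarith
  then show "traverses A B n m ((take i vs @ drop j vs) ! t) ((take i es @ drop j es) ! t)
        ((take i vs @ drop j vs) ! Suc t)"
  proof cases
    case 3
    then have "traverses A B n m (vs ! (j + t - i)) (es ! (j + t - i)) (vs ! Suc (j + t - i))"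
      using step[of "j + t - i"] t assms(2,3) by auto
    then show ?thesis
      using 3 assms(2,3) len t by (auto simp: nth_append Suc_diff_le)
  qed (use step[of t] assms len t in \<open>auto simp: nth_append\<close>)
qed

lemma closed_walk_split_at_repeated_vertex:
  assumes "closed_walk A B n m vs es" "\<not> distinct (tl vs)"
  obtains xs zs ys vs1 vs2 where "es = xs @ zs @ ys" "zs \<noteq> []" "xs @ ys \<noteq> []"
    "even (length zs)" "closed_walk A B n m vs1 zs" "closed_walk A B n m vs2 (xs @ ys)"
proof -
  have walk: "is_walk A B n m vs es" and closed: "vs ! 0 = vs ! length es"
    using assms(1) closed_walk_iff_nth by auto
  then have len: "length vs = Suc (length es)"
    unfolding is_walk_def by simp
  obtain p q where pq: "p < q" "q < length (tl vs)" "tl vs ! p = tl vs ! q"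
    using assms(2) unfolding distinct_conv_nth by (metis linorder_neqE_nat)
  define i j where "i = Suc p" and "j = Suc q"
  have ij: "0 < i" "i < j" "j \<le> length es" "vs ! i = vs ! j"
    using pq len by (auto simp: i_def j_def nth_tl)
  show thesis
  proof
    have "drop (j - i) (drop i es) = drop j es"
      using ij by simp
    then show "es = take i es @ take (j - i) (drop i es) @ drop j es"
      by (metis append_take_drop_id)
    show "even (length (take (j - i) (drop i es)))"
      using is_walk_repeated_vertex_even[OF walk, of i j] ij len by simp
    show "closed_walk A B n m (take (j - i + 1) (drop i vs)) (take (j - i) (drop i es))"
      unfolding closed_walk_iff_nth
      using is_walk_segment[OF walk, of i j] ij len by simp
    show "closed_walk A B n m (take i vs @ drop j vs) (take i es @ drop j es)"
      unfolding closed_walk_iff_nth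
      using is_walk_shortcut[OF walk, of i j] ij len closed by (simp add: nth_append)
  qed (use ij in auto)
qed

lemma s_walk_splice:
  assumes "s_walk A B n m vs1 zs" "s_walk A B n m vs2 (xs @ ys)" "even (length zs)"
    and "closed_walk A B n m vs (xs @ zs @ ys)"
  shows "s_walk A B n m vs (xs @ zs @ ys)"
  using assms prod_even_odd_splice[of zs "\<lambda>e. the (label A e)" xs ys]
  unfolding s_walk_iff_prod_even_odd by auto

lemma closed_walk_repeated_edge:
  assumes "closed_walk A B n m vs es" "distinct (tl vs)" "\<not> distinct es"
  obtains e where "es = [e, e]" "label A e \<noteq> None"
proof -
  define k where "k = length es"
  have "is_walk A B n m vs es" and closed: "vs ! 0 = vs ! k"
    using assms(1) closed_walk_iff_nth k_def by auto
  then have len: "length vs = Suc k"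
    and step: "\<And>t. t < k \<Longrightarrow> traverses A B n m (vs ! t) (es ! t) (vs ! Suc t)"
    unfolding is_walk_def k_def by auto
  have inj: "p = q" if "1 \<le> p" "p \<le> k" "1 \<le> q" "q \<le> k" "vs ! p = vs ! q" for p q
  proof -
    have "tl vs ! (p - 1) = tl vs ! (q - 1)"
      using that len by (simp add: nth_tl)
    then have "p - 1 = q - 1"
      using that assms(2) len nth_eq_iff_index_eq[of "tl vs" "p - 1" "q - 1"] by simp
    then show ?thesis
      using that by simp
  qed
  obtain a b where ab: "a < b" "b < k" "es ! a = es ! b"
    using assms(3) unfolding distinct_conv_nth k_def by (metis linorder_neqE_nat)
  have fwd: "traverses A B n m (vs ! a) (es ! a) (vs ! Suc a)"
    using step[of a] ab(1,2) by simp
  have bwd: "traverses A B n m (vs ! b) (es ! a) (vs ! Suc b)"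
    using step[of b] ab by simp
  have "vs ! Suc a \<noteq> vs ! Suc b"
    using inj[of "Suc a" "Suc b"] ab by auto
  then have reversed: "vs ! a = vs ! Suc b" "vs ! Suc a = vs ! b"
    using traverses_same_edge[OF fwd bwd] by auto
  have b: "b = Suc a"
    using inj[of "Suc a" b] reversed ab by auto
  have a: "a = 0"
    using inj[of a "Suc b"] reversed ab b by fastforce
  have "k = 2"
    using inj[of 2 k] reversed ab a b closed by (auto simp: numeral_2_eq_2)
  then have "es = [es ! 0, es ! 0]"
    using ab a b k_def by (auto simp: length_Suc_conv numeral_2_eq_2)
  moreover have "label A (es ! 0) \<noteq> None"
    using traverses_both_ways_label[OF fwd] bwd reversed a b by auto
  ultimately show thesis
    using that by blast
qed

theorem lemma2p7:
  fixes A B :: "nat \<Rightarrow> nat \<Rightarrow> real" and n m :: nat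
  assumes "steady A B n m"
    and "closed_walk A B n m vs es"
    and "es \<noteq> []"
  shows "s_walk A B n m vs es"
  using assms(2,3)
proof (induction "length es" arbitrary: vs es rule: less_induct)
  case less
  consider "\<not> distinct (tl vs)" | "distinct (tl vs)" "distinct es"
    | "distinct (tl vs)" "\<not> distinct es"
    by blast
  then show ?case
  proof cases
    case 1
    then obtain xs zs ys vs1 vs2 where parts: "es = xs @ zs @ ys" "zs \<noteq> []" "xs @ ys \<noteq> []"
      "even (length zs)" "closed_walk A B n m vs1 zs" "closed_walk A B n m vs2 (xs @ ys)"
      by (rule closed_walk_split_at_repeated_vertex[OF less.prems(1)])
    have "length zs < length es" "length (xs @ ys) < length es"
      using parts(1-3) by auto
    then have "s_walk A B n m vs1 zs" "s_walk A B n m vs2 (xs @ ys)"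
      using less.hyps parts(2,3,5,6) by blast+
    then show ?thesis
      using s_walk_splice parts(1,4) less.prems(1) by blast
  next
    case 2
    then have "is_cycle A B n m vs es"
      using less.prems unfolding is_cycle_def by blast
    then show ?thesis
      using assms(1) unfolding steady_def s_cycle_def by blast
  next
    case 3
    then obtain e where "es = [e, e]" "label A e \<noteq> None"
      by (rule closed_walk_repeated_edge[OF less.prems(1)])
    then show ?thesis
      using less.prems(1) by (simp add: s_walk_iff_prod_even_odd)
  qed
qed

end
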